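(* Let $A$ and $G$ be selfadjoint operators in the Hilbert space $\mathcal H$. Each of the following conditions implies that $\rho(AG)\neq\emptyset$ and $\rho(GA)\neq\emptyset$: (a) $G$ is bounded and $\rho(GA)\neq\emptyset$; (b) $G$ is boundedly invertible and $\rho(AG)\neq\emptyset$; (c) $(AG)^*=GA$ and $\rho(AG)\neq\emptyset$; (d) $\rho(AG)\neq\emptyset$, $GA$ is closed, and for some $\lambda\in\rho(AG)\setminus\{0\}$ the operator $G(AG-\lambda)^{-1}A$ is bounded on $\operatorname{dom}A$.
   Context: $(\mathcal H,(\cdot,\cdot))$ is a complex Hilbert space; $A,G$ are possibly unbounded selfadjoint operators, and $AG$, $GA$ denote the usual operator products with their natural domains. For a linear operator $S$, $\rho(S)$ is the set of $\lambda\in\mathbb C$ such that $S-\lambda$ is injective, $\operatorname{ran}(S-\lambda)=\mathcal H$ and $(S-\lambda)^{-1}$ is bounded and everywhere defined. $S$ is boundedly invertible if $0\in\rho(S)$. *)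

theory Defs
  imports "HOL-Analysis.Analysis"
begin

text \<open>Complex Hilbert spaces: the library only has real inner product spaces, so we
introduce the class of complex Hilbert spaces (complete complex inner product spaces).\<close>

class chilbert_space = banach +
  fixes scaleC :: "complex \<Rightarrow> 'a \<Rightarrow> 'a" (infixr "*\<^sub>C" 75)
    and cinner :: "'a \<Rightarrow> 'a \<Rightarrow> complex"
  assumes scaleC_add_right: "a *\<^sub>C (x + y) = a *\<^sub>C x + a *\<^sub>C y"
    and scaleC_add_left: "(a + b) *\<^sub>C x = a *\<^sub>C x + b *\<^sub>C x"
    and scaleC_scaleC: "a *\<^sub>C (b *\<^sub>C x) = (a * b) *\<^sub>C x"
    and scaleC_one: "1 *\<^sub>C x = x"
    and scaleR_scaleC: "scaleR r x = complex_of_real r *\<^sub>C x"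
    and cinner_commute: "cinner x y = cnj (cinner y x)"
    and cinner_add_right: "cinner x (y + z) = cinner x y + cinner x z"
    and cinner_scaleC_right: "cinner x (a *\<^sub>C y) = a * cinner x y"
    and norm_cinner: "norm x = sqrt (Re (cinner x x))"

text \<open>A (possibly unbounded) linear operator is given by its domain and its action.\<close>
type_synonym 'a op = "'a set \<times> ('a \<Rightarrow> 'a)"

definition dom :: "'a op \<Rightarrow> 'a set" where "dom S = fst S"
definition app :: "'a op \<Rightarrow> 'a \<Rightarrow> 'a" where "app S = snd S"

definition op_prod :: "'a op \<Rightarrow> 'a op \<Rightarrow> 'a op" (infixl "\<bullet>\<^sub>o\<^sub>p" 70) where
  "S \<bullet>\<^sub>o\<^sub>p T = ({x \<in> dom T. app T x \<in> dom S}, \<lambda>x. app S (app T x))"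

definition is_adjoint :: "'a::chilbert_space op \<Rightarrow> 'a op \<Rightarrow> bool" where
  "is_adjoint S T \<longleftrightarrow> closure (dom S) = UNIV \<and>
     dom T = {y. \<exists>z. \<forall>x\<in>dom S. cinner (app S x) y = cinner x z} \<and>
     (\<forall>y\<in>dom T. \<forall>x\<in>dom S. cinner (app S x) y = cinner x (app T y))"

definition selfadjoint :: "'a::chilbert_space op \<Rightarrow> bool" where
  "selfadjoint S \<longleftrightarrow> is_adjoint S S"

definition shift :: "'a::chilbert_space op \<Rightarrow> complex \<Rightarrow> 'a \<Rightarrow> 'a" where
  "shift S \<mu> = (\<lambda>x. app S x - \<mu> *\<^sub>C x)"

text \<open>The inverse \<open>(S - \<mu>)\<^sup>-\<^sup>1\<close> (meaningful when \<open>S - \<mu>\<close> is injective on its domain).\<close>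
definition res :: "'a::chilbert_space op \<Rightarrow> complex \<Rightarrow> 'a \<Rightarrow> 'a" where
  "res S \<mu> = the_inv_into (dom S) (shift S \<mu>)"

definition resolvent_set :: "'a::chilbert_space op \<Rightarrow> complex set" ("\<rho>") where
  "\<rho> S = {\<mu>. inj_on (shift S \<mu>) (dom S) \<and> shift S \<mu> ` dom S = UNIV \<and>
             (\<exists>C. \<forall>y. norm (res S \<mu> y) \<le> C * norm y)}"

definition bounded_op :: "'a::chilbert_space op \<Rightarrow> bool" where
  "bounded_op S \<longleftrightarrow> (\<exists>C. \<forall>x\<in>dom S. norm (app S x) \<le> C * norm x)"

definition closed_op :: "'a::chilbert_space op \<Rightarrow> bool" where
  "closed_op S \<longleftrightarrow> closed {(x, app S x) | x. x \<in> dom S}"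

end

theory Submission
  imports Defs
begin

text \<open>
  The central observation is that \<open>AG\<close> and \<open>GA\<close> are always formally adjoint to each other
  (\<open>(AGv, x) = (v, GAx)\<close>), and that whenever one of them, say \<open>S\<close>, has \<open>\<mu>\<close> in its resolvent
  set and the other one, \<open>T\<close>, contains the Hilbert space adjoint \<open>S\<^sup>*\<close>, then \<open>\<mu>\<^sup>*\<close> lies
  in the resolvent set of \<open>T\<close>: the kernel of \<open>T - \<mu>\<^sup>*\<close> is trivial by formal adjointness, and the
  bounded adjoint of \<open>(S - \<mu>)\<^sup>-\<^sup>1\<close> is a bounded right inverse of \<open>T - \<mu>\<^sup>*\<close>.
  Conditions (a), (b) and (c) of the theorem each guarantee \<open>S\<^sup>* \<subseteq> T\<close> for a suitable
  choice of \<open>S, T \<in> {AG, GA}\<close>.  Under condition (d) an explicit right inverse of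
  \<open>GA - \<mu>\<close> on the dense subspace \<open>dom A\<close>, namely \<open>\<mu>\<^sup>-\<^sup>1 (G(AG - \<mu>)\<^sup>-\<^sup>1A - I)\<close>, is
  bounded and extends to all of \<open>\<H>\<close> because \<open>GA\<close> is closed.
\<close>

section \<open>Algebra of the complex inner product\<close>

lemma cinner_add_left: "cinner (x + y) z = cinner x z + cinner y z"
  by (metis cinner_add_right cinner_commute complex_cnj_add)

lemma cinner_scaleC_left: "cinner (a *\<^sub>C x) y = cnj a * cinner x y"
  by (metis cinner_commute cinner_scaleC_right complex_cnj_mult)

lemma cinner_zero_right [simp]: "cinner x 0 = 0"
  using cinner_add_right[of x 0 0] by simp

lemma cinner_zero_left [simp]: "cinner 0 x = 0"
  using cinner_add_left[of 0 0 x] by simp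

lemma scaleC_minus_one: "(-1) *\<^sub>C x = - x"
  using scaleR_scaleC[of "-1" x] by simp

lemma scaleC_zero_left [simp]: "0 *\<^sub>C x = 0"
  using scaleR_scaleC[of 0 x] by simp

lemma scaleC_zero_right [simp]: "a *\<^sub>C 0 = 0"
  using scaleC_add_right[of a 0 0] by simp

lemma scaleC_minus_right: "a *\<^sub>C (- x) = - (a *\<^sub>C x)"
  using scaleC_add_right[of a "-x" x] by (simp add: eq_neg_iff_add_eq_0)

lemma scaleC_diff_right: "a *\<^sub>C (x - y) = a *\<^sub>C x - a *\<^sub>C y"
  unfolding diff_conv_add_uminus by (simp only: scaleC_add_right scaleC_minus_right)

lemma cinner_minus_right: "cinner x (- y) = - cinner x y"
  using cinner_add_right[of x "-y" y] by (simp add: eq_neg_iff_add_eq_0)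

lemma cinner_diff_right: "cinner x (y - z) = cinner x y - cinner x z"
  unfolding diff_conv_add_uminus by (simp only: cinner_add_right cinner_minus_right)

lemma cinner_diff_left: "cinner (x - y) z = cinner x z - cinner y z"
  by (metis cinner_commute cinner_diff_right complex_cnj_diff)

lemma cinner_self: "cinner x x = complex_of_real ((norm x)\<^sup>2)"
proof -
  have real: "Im (cinner x x) = 0"
    using arg_cong[OF cinner_commute[of x x], of Im] by simp
  have "0 \<le> Re (cinner x x)"
    using norm_cinner[of x] norm_ge_zero[of x] by (metis real_sqrt_lt_0_iff not_le)
  then have "Re (cinner x x) = (norm x)\<^sup>2"
    using norm_cinner[of x] by simp
  with real show ?thesis by (simp add: complex_eq_iff)
qed

lemma cinner_self_eq_0: "cinner x x = 0 \<longleftrightarrow> x = 0"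
  by (simp add: cinner_self)

lemma norm_scaleC: "norm (a *\<^sub>C x) = cmod a * norm x"
proof -
  have "cinner (a *\<^sub>C x) (a *\<^sub>C x) = (a * cnj a) * cinner x x"
    by (simp add: cinner_scaleC_left cinner_scaleC_right)
  also have "\<dots> = complex_of_real ((cmod a * norm x)\<^sup>2)"
    by (simp add: complex_norm_square[symmetric] cinner_self power_mult_distrib)
  finally have "(norm (a *\<^sub>C x))\<^sup>2 = (cmod a * norm x)\<^sup>2"
    by (simp only: cinner_self of_real_eq_iff)
  then show ?thesis by (simp add: power2_eq_iff_nonneg)
qed

lemma norm_diff_scaleC_square:
  "(norm (x - t *\<^sub>C y))\<^sup>2 = (norm x)\<^sup>2 - 2 * Re (t * cinner x y) + (cmod t)\<^sup>2 * (norm y)\<^sup>2"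
proof -
  have "cinner (x - t *\<^sub>C y) (x - t *\<^sub>C y)
      = cinner x x - t * cinner x y - cnj (t * cinner x y) + (t * cnj t) * cinner y y"
    by (simp add: cinner_diff_left cinner_diff_right cinner_scaleC_left cinner_scaleC_right
        cinner_commute[of y x] algebra_simps)
  then have "(norm (x - t *\<^sub>C y))\<^sup>2 = Re (cinner x x - t * cinner x y - cnj (t * cinner x y)
      + (t * cnj t) * cinner y y)"
    by (metis cinner_self Re_complex_of_real)
  then show ?thesis
    by (simp add: cinner_self complex_norm_square[symmetric] del: of_real_power)
qed

lemma cauchy_schwarz: "cmod (cinner x y) \<le> norm x * norm y"
proof (cases "y = 0")
  case True
  then show ?thesis by simp
next
  case False
  define a where "a = cinner x y"
  define N where "N = (norm y)\<^sup>2"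
  have N: "N > 0" using False by (simp add: N_def)
  define t where "t = cnj a / complex_of_real N"
  have "t * a = (cnj a * a) / complex_of_real N"
    by (simp add: t_def)
  also have "cnj a * a = complex_of_real ((cmod a)\<^sup>2)"
    by (metis complex_norm_square mult.commute)
  finally have "t * a = complex_of_real ((cmod a)\<^sup>2 / N)"
    by simp
  moreover have "(cmod t)\<^sup>2 * N = (cmod a)\<^sup>2 / N"
    using N by (simp add: t_def norm_divide power_divide power2_eq_square)
  ultimately have "(norm (x - t *\<^sub>C y))\<^sup>2 = (norm x)\<^sup>2 - (cmod a)\<^sup>2 / N"
    by (simp add: norm_diff_scaleC_square a_def N_def)
  then have "(cmod a)\<^sup>2 \<le> (norm x)\<^sup>2 * N"
    using N by (metis diff_ge_0_iff_ge zero_le_power2 divide_le_eq)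
  then have "(cmod a)\<^sup>2 \<le> (norm x * norm y)\<^sup>2"
    by (simp add: N_def power_mult_distrib)
  then show ?thesis
    unfolding a_def by (simp add: abs_le_square_iff)
qed

lemma parallelogram:
  fixes x y :: "'a::chilbert_space"
  shows "(norm (x + y))\<^sup>2 + (norm (x - y))\<^sup>2 = 2 * (norm x)\<^sup>2 + 2 * (norm y)\<^sup>2"
proof -
  have "cinner (x + y) (x + y) + cinner (x - y) (x - y) = 2 * cinner x x + 2 * cinner y y"
    by (simp add: cinner_add_left cinner_add_right cinner_diff_left cinner_diff_right)
  then have "complex_of_real ((norm (x + y))\<^sup>2 + (norm (x - y))\<^sup>2)
      = complex_of_real (2 * (norm x)\<^sup>2 + 2 * (norm y)\<^sup>2)"
    by (simp add: cinner_self)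
  then show ?thesis by (simp only: of_real_eq_iff)
qed

lemma bounded_linear_cinner_left:
  fixes y :: "'a::chilbert_space"
  shows "bounded_linear (\<lambda>x. cinner x y)"
proof (rule bounded_linear_intro[where K = "norm y"])
  show "cinner (x + z) y = cinner x y + cinner z y" for x z :: 'a
    by (rule cinner_add_left)
  show "cinner (r *\<^sub>R x) y = r *\<^sub>R cinner x y" for r and x :: 'a
    by (simp add: scaleR_scaleC cinner_scaleC_left scaleR_conv_of_real)
  show "norm (cinner x y) \<le> norm x * norm y" for x :: 'a
    by (rule cauchy_schwarz)
qed

lemma bounded_linear_cinner_right:
  fixes x :: "'a::chilbert_space"
  shows "bounded_linear (\<lambda>y. cinner x y)"
proof (rule bounded_linear_intro[where K = "norm x"])
  show "cinner x (y + z) = cinner x y + cinner x z" for y z :: 'a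
    by (rule cinner_add_right)
  show "cinner x (r *\<^sub>R y) = r *\<^sub>R cinner x y" for r and y :: 'a
    by (simp add: scaleR_scaleC cinner_scaleC_right scaleR_conv_of_real)
  show "norm (cinner x y) \<le> norm y * norm x" for y :: 'a
    using cauchy_schwarz[of x y] by (simp add: mult.commute)
qed

lemma bounded_linear_scaleC: "bounded_linear (\<lambda>x::'a::chilbert_space. c *\<^sub>C x)"
proof (rule bounded_linear_intro[where K = "cmod c"])
  show "c *\<^sub>C (x + y) = c *\<^sub>C x + c *\<^sub>C y" for x y :: 'a
    by (rule scaleC_add_right)
  show "c *\<^sub>C (r *\<^sub>R x) = r *\<^sub>R (c *\<^sub>C x)" for r and x :: 'a
    by (simp add: scaleR_scaleC scaleC_scaleC mult.commute)
  show "norm (c *\<^sub>C x) \<le> norm x * cmod c" for x :: 'a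
    by (simp add: norm_scaleC mult.commute)
qed

lemma dense_cinner_unique:
  fixes a b :: "'a::chilbert_space"
  assumes "closure D = UNIV" and "\<And>u. u \<in> D \<Longrightarrow> cinner u a = cinner u b"
  shows "a = b"
proof -
  obtain u where u: "\<And>n. u n \<in> D" "u \<longlonglongrightarrow> a - b"
    using assms(1) closure_sequential by blast
  have "(\<lambda>n. cinner (u n) (a - b)) \<longlonglongrightarrow> cinner (a - b) (a - b)"
    using bounded_linear.tendsto[OF bounded_linear_cinner_left u(2)] .
  moreover have "cinner (u n) (a - b) = 0" for n
    using assms(2)[OF u(1)] by (simp add: cinner_diff_right)
  ultimately have "cinner (a - b) (a - b) = 0"
    by (simp add: LIMSEQ_unique)
  then show ?thesis by (simp add: cinner_self_eq_0)
qed

section \<open>Riesz representation and bounded adjoints\<close>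

text \<open>A sequence in a convex set whose norms approach a lower bound \<open>d\<close> of the norms
  on the set is Cauchy, by the parallelogram law.\<close>

lemma minimizing_sequence_Cauchy:
  fixes xs :: "nat \<Rightarrow> 'a::chilbert_space"
  assumes S: "convex S" and xs: "\<And>n. xs n \<in> S"
    and lower: "\<And>x. x \<in> S \<Longrightarrow> d \<le> norm x" and d: "0 \<le> d"
    and near: "\<And>n. (norm (xs n))\<^sup>2 \<le> d\<^sup>2 + g n" and g: "g \<longlonglongrightarrow> 0"
  shows "Cauchy xs"
proof (rule metric_CauchyI)
  fix r :: real
  assume r: "0 < r"
  have diff: "(norm (xs m - xs n))\<^sup>2 \<le> 2 * g m + 2 * g n" for m n
  proof -
    have "(1/2) *\<^sub>R xs m + (1/2) *\<^sub>R xs n \<in> S"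
      by (rule convexD[OF S xs xs]) auto
    then have "d \<le> norm ((1/2) *\<^sub>R (xs m + xs n))"
      using lower by (simp add: scaleR_add_right)
    then have "d \<le> norm (xs m + xs n) / 2"
      by simp
    then have "(2 * d)\<^sup>2 \<le> (norm (xs m + xs n))\<^sup>2"
      using d by (intro power_mono) auto
    then show ?thesis
      using parallelogram[of "xs m" "xs n"] near[of m] near[of n] by (simp add: power_mult_distrib)
  qed
  have "\<forall>\<^sub>F n in sequentially. g n < r\<^sup>2 / 4"
    using order_tendstoD(2)[OF g, of "r\<^sup>2 / 4"] r by simp
  then obtain N where N: "\<And>n. n \<ge> N \<Longrightarrow> g n < r\<^sup>2 / 4"
    unfolding eventually_sequentially by blast
  have "dist (xs m) (xs n) < r" if "m \<ge> N" "n \<ge> N" for m n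
  proof -
    have "(norm (xs m - xs n))\<^sup>2 < r\<^sup>2"
      using diff[of m n] N[OF that(1)] N[OF that(2)] by linarith
    then show ?thesis
      using r by (simp add: dist_norm power_less_imp_less_base)
  qed
  then show "\<exists>N. \<forall>m\<ge>N. \<forall>n\<ge>N. dist (xs m) (xs n) < r" by blast
qed

lemma min_norm_point:
  fixes S :: "'a::chilbert_space set"
  assumes S: "convex S" "closed S" "S \<noteq> {}"
  shows "\<exists>x0\<in>S. \<forall>x\<in>S. norm x0 \<le> norm x"
proof -
  define d where "d = Inf (norm ` S)"
  have bdd: "bdd_below (norm ` S)" by (rule bdd_belowI[of _ 0]) auto
  have lower: "d \<le> norm x" if "x \<in> S" for x
    unfolding d_def using bdd that by (simp add: cInf_lower)
  have d: "0 \<le> d"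
    unfolding d_def using S(3) by (intro cInf_greatest) auto
  define e where "e n = inverse (real (Suc n))" for n
  have e: "e \<longlonglongrightarrow> 0" unfolding e_def by (rule LIMSEQ_inverse_real_of_nat)
  have "\<exists>x\<in>S. norm x < d + e n" for n
  proof -
    have "Inf (norm ` S) < d + e n" by (simp add: d_def e_def)
    then show ?thesis using cInf_lessD[of "norm ` S"] S(3) by blast
  qed
  then obtain xs where xs: "\<And>n. xs n \<in> S" "\<And>n. norm (xs n) < d + e n"
    by metis
  have "Cauchy xs"
  proof (rule minimizing_sequence_Cauchy[OF S(1) xs(1) lower d])
    show "(norm (xs n))\<^sup>2 \<le> d\<^sup>2 + ((d + e n)\<^sup>2 - d\<^sup>2)" for n
      using xs(2)[of n] by (simp add: power_mono)
    have "(\<lambda>n. (d + e n)\<^sup>2 - d\<^sup>2) \<longlonglongrightarrow> (d + 0)\<^sup>2 - d\<^sup>2"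
      by (intro tendsto_intros e)
    then show "(\<lambda>n. (d + e n)\<^sup>2 - d\<^sup>2) \<longlonglongrightarrow> 0" by simp
  qed
  then obtain x0 where x0: "xs \<longlonglongrightarrow> x0" using convergent_eq_Cauchy by blast
  have "x0 \<in> S" using S(2) xs(1) x0 closed_sequentially by blast
  moreover have "norm x0 \<le> d"
  proof (rule LIMSEQ_le)
    show "(\<lambda>n. norm (xs n)) \<longlonglongrightarrow> norm x0" by (intro tendsto_intros x0)
    show "(\<lambda>n. d + e n) \<longlonglongrightarrow> d" using tendsto_add[OF tendsto_const e, of d] by simp
    show "\<exists>N. \<forall>n\<ge>N. norm (xs n) \<le> d + e n" using xs(2) less_imp_le by blast
  qed
  ultimately show ?thesis using lower order_trans by blast
qed

lemma min_norm_orthogonal: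
  assumes min: "\<And>t. norm x0 \<le> norm (x0 - t *\<^sub>C m)"
  shows "cinner x0 m = 0"
proof -
  define a where "a = cinner x0 m"
  define M where "M = (norm m)\<^sup>2"
  define s where "s = 1 / (M + 1)"
  have s: "s > 0" "s * M < 1" by (simp_all add: s_def M_def field_simps add_pos_nonneg)
  define t where "t = complex_of_real s * cnj a"
  have "(norm x0)\<^sup>2 \<le> (norm (x0 - t *\<^sub>C m))\<^sup>2"
    using min[of t] by (simp add: power_mono)
  also have "\<dots> = (norm x0)\<^sup>2 - 2 * s * (cmod a)\<^sup>2 + s\<^sup>2 * (cmod a)\<^sup>2 * M"
  proof -
    have "t * a = complex_of_real s * (a * cnj a)" by (simp add: t_def mult.commute)
    then have "Re (t * a) = s * (cmod a)\<^sup>2" by (simp only: complex_norm_square[symmetric]) simp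
    moreover have "(cmod t)\<^sup>2 = s\<^sup>2 * (cmod a)\<^sup>2"
      using s by (simp add: t_def norm_mult power_mult_distrib)
    ultimately show ?thesis
      by (simp add: norm_diff_scaleC_square a_def M_def)
  qed
  finally have "0 \<le> s * (cmod a)\<^sup>2 * (s * M - 2)"
    by (simp add: algebra_simps power2_eq_square)
  then have "s * (cmod a)\<^sup>2 \<le> 0"
    using s by (simp add: zero_le_mult_iff)
  then show ?thesis
    using s unfolding a_def by (simp add: zero_le_mult_iff mult_le_0_iff)
qed

text \<open>The representing vector is a multiple of the minimal-norm
  element of the closed convex level set \<open>{f = 1}\<close>.\<close>

lemma riesz_representation:
  fixes f :: "'a::chilbert_space \<Rightarrow> complex"
  assumes add: "\<And>x y. f (x + y) = f x + f y"
    and hom: "\<And>c x. f (c *\<^sub>C x) = c * f x"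
    and bnd: "\<And>x. cmod (f x) \<le> K * norm x"
  shows "\<exists>y. \<forall>x. f x = cinner y x"
proof (cases "\<forall>x. f x = 0")
  case True
  then show ?thesis by (intro exI[of _ 0]) simp
next
  case False
  then obtain e where e: "f e \<noteq> 0" by blast
  have real_hom: "f (r *\<^sub>R x) = r *\<^sub>R f x" for r x
    by (simp add: scaleR_scaleC hom scaleR_conv_of_real)
  have bl: "bounded_linear f"
    by (rule bounded_linear_intro[where K = K]) (use add real_hom bnd in \<open>auto simp: mult.commute\<close>)
  then have lin: "linear f" by (rule bounded_linear.linear)
  define S where "S = {x. f x = 1}"
  have "closed S"
    unfolding S_def by (intro closed_Collect_eq continuous_intros linear_continuous_on bl)
  moreover have "convex S"
    unfolding S_def convex_def by (simp add: add real_hom scaleR_conv_of_real flip: of_real_add)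
  moreover have "(1 / f e) *\<^sub>C e \<in> S"
    using e by (simp add: S_def hom)
  ultimately obtain x0 where x0: "f x0 = 1" and min: "\<And>x. f x = 1 \<Longrightarrow> norm x0 \<le> norm x"
    using min_norm_point[of S] unfolding S_def by blast
  have orth: "cinner x0 m = 0" if "f m = 0" for m
    by (rule min_norm_orthogonal, rule min) (simp add: linear_diff[OF lin] hom that x0)
  have x0_norm: "norm x0 \<noteq> 0" using x0 linear_0[OF lin] by force
  show ?thesis
  proof (intro exI allI)
    fix x
    have "f (x - f x *\<^sub>C x0) = 0"
      by (simp add: linear_diff[OF lin] hom x0)
    then have "cinner x0 (x - f x *\<^sub>C x0) = 0" by (rule orth)
    then have "cinner x0 x = f x * complex_of_real ((norm x0)\<^sup>2)"
      by (simp add: cinner_diff_right cinner_scaleC_right cinner_self)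
    then show "f x = cinner ((1 / complex_of_real ((norm x0)\<^sup>2)) *\<^sub>C x0) x"
      using x0_norm by (simp add: cinner_scaleC_left)
  qed
qed

lemma bounded_adjoint_exists:
  fixes R :: "'a::chilbert_space \<Rightarrow> 'a"
  assumes add: "\<And>x y. R (x + y) = R x + R y" and hom: "\<And>c x. R (c *\<^sub>C x) = c *\<^sub>C R x"
    and bnd: "\<And>x. norm (R x) \<le> C * norm x"
  shows "\<exists>R'. (\<forall>y z. cinner (R y) z = cinner y (R' z)) \<and> (\<forall>z. norm (R' z) \<le> C * norm z)"
proof -
  have "\<exists>v. \<forall>y. cinner z (R y) = cinner v y" for z
  proof (rule riesz_representation[where K = "C * norm z"])
    show "cmod (cinner z (R x)) \<le> C * norm z * norm x" for x
    proof -
      have "cmod (cinner z (R x)) \<le> norm z * norm (R x)" by (rule cauchy_schwarz)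
      also have "\<dots> \<le> norm z * (C * norm x)" using bnd[of x] by (simp add: mult_left_mono)
      finally show ?thesis by (simp add: algebra_simps)
    qed
  qed (simp_all add: add hom cinner_add_right cinner_scaleC_right)
  then have "\<exists>v. \<forall>y. cinner (R y) z = cinner y v" for z
    by (metis cinner_commute)
  then obtain R' where R': "\<And>y z. cinner (R y) z = cinner y (R' z)"
    by metis
  have "norm (R' z) \<le> C * norm z" for z
  proof -
    have Cz: "0 \<le> C * norm z" using bnd[of z] norm_ge_zero order_trans by blast
    have "(norm (R' z))\<^sup>2 = cmod (cinner (R (R' z)) z)"
      by (simp add: R' cinner_self norm_power)
    also have "\<dots> \<le> norm (R (R' z)) * norm z" by (rule cauchy_schwarz)
    also have "\<dots> \<le> C * norm (R' z) * norm z" using bnd by (simp add: mult_right_mono)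
    finally have "norm (R' z) * norm (R' z) \<le> norm (R' z) * (C * norm z)"
      by (simp add: power2_eq_square algebra_simps)
    then show ?thesis
      using Cz by (cases "norm (R' z) = 0") (auto simp: mult_le_cancel_left)
  qed
  with R' show ?thesis by blast
qed

section \<open>Linear operators and resolvents\<close>

definition linop :: "'a::chilbert_space op \<Rightarrow> bool" where
  "linop S \<longleftrightarrow> 0 \<in> dom S \<and>
     (\<forall>x\<in>dom S. \<forall>y\<in>dom S. x + y \<in> dom S \<and> app S (x + y) = app S x + app S y) \<and>
     (\<forall>c. \<forall>x\<in>dom S. c *\<^sub>C x \<in> dom S \<and> app S (c *\<^sub>C x) = c *\<^sub>C app S x)"

lemma linopD:
  assumes "linop S"
  shows "0 \<in> dom S" "x \<in> dom S \<Longrightarrow> y \<in> dom S \<Longrightarrow> x + y \<in> dom S"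
    "x \<in> dom S \<Longrightarrow> y \<in> dom S \<Longrightarrow> app S (x + y) = app S x + app S y"
    "x \<in> dom S \<Longrightarrow> c *\<^sub>C x \<in> dom S" "x \<in> dom S \<Longrightarrow> app S (c *\<^sub>C x) = c *\<^sub>C app S x"
  using assms unfolding linop_def by auto

lemma linop_diff:
  assumes "linop S" "x \<in> dom S" "y \<in> dom S"
  shows "x - y \<in> dom S" "app S (x - y) = app S x - app S y"
proof -
  have minus: "x - y = x + (-1) *\<^sub>C y" by (simp add: scaleC_minus_one)
  show "x - y \<in> dom S"
    unfolding minus using assms by (simp add: linopD)
  have "app S (x + (-1) *\<^sub>C y) = app S x + (-1) *\<^sub>C app S y"
    using assms linopD(3)[OF assms(1,2) linopD(4)[OF assms(1,3)]] linopD(5) by metis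
  then show "app S (x - y) = app S x - app S y"
    unfolding minus by (simp add: scaleC_minus_one)
qed

lemma linop_app_zero: "linop S \<Longrightarrow> app S 0 = 0"
  using linopD(5)[of S 0 0] linopD(1)[of S] by simp

lemma dom_prod: "dom (S \<bullet>\<^sub>o\<^sub>p T) = {x \<in> dom T. app T x \<in> dom S}"
  by (simp add: op_prod_def dom_def)

lemma app_prod: "app (S \<bullet>\<^sub>o\<^sub>p T) x = app S (app T x)"
  by (simp add: op_prod_def app_def)

lemma linop_prod: "linop S \<Longrightarrow> linop T \<Longrightarrow> linop (S \<bullet>\<^sub>o\<^sub>p T)"
  using linop_app_zero[of T] unfolding linop_def dom_prod app_prod by auto

lemma shift_add:
  assumes "linop S" "x \<in> dom S" "y \<in> dom S"
  shows "shift S \<mu> (x + y) = shift S \<mu> x + shift S \<mu> y"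
  using assms by (simp add: shift_def linopD scaleC_add_right algebra_simps)

lemma shift_scaleC:
  assumes "linop S" "x \<in> dom S"
  shows "shift S \<mu> (c *\<^sub>C x) = c *\<^sub>C shift S \<mu> x"
  using assms by (simp add: shift_def linopD scaleC_diff_right scaleC_scaleC mult.commute)

lemma shift_diff:
  assumes "linop S" "x \<in> dom S" "y \<in> dom S"
  shows "shift S \<mu> (x - y) = shift S \<mu> x - shift S \<mu> y"
  using assms by (simp add: shift_def linop_diff scaleC_diff_right algebra_simps)

lemma resolvent_setD:
  assumes "\<mu> \<in> \<rho> S"
  shows "inj_on (shift S \<mu>) (dom S)" "shift S \<mu> ` dom S = UNIV"
    "\<exists>C. \<forall>y. norm (res S \<mu> y) \<le> C * norm y"
  using assms unfolding resolvent_set_def by auto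

lemma res_in_dom: "\<mu> \<in> \<rho> S \<Longrightarrow> res S \<mu> y \<in> dom S"
  unfolding res_def using resolvent_setD by (metis UNIV_I the_inv_into_into order_refl)

lemma shift_res: "\<mu> \<in> \<rho> S \<Longrightarrow> shift S \<mu> (res S \<mu> y) = y"
  unfolding res_def using resolvent_setD by (metis UNIV_I f_the_inv_into_f)

lemma res_shift: "\<mu> \<in> \<rho> S \<Longrightarrow> x \<in> dom S \<Longrightarrow> res S \<mu> (shift S \<mu> x) = x"
  unfolding res_def using resolvent_setD by (metis the_inv_into_f_f)

lemma res_add:
  assumes "linop S" "\<mu> \<in> \<rho> S"
  shows "res S \<mu> (y1 + y2) = res S \<mu> y1 + res S \<mu> y2"
proof -
  have "shift S \<mu> (res S \<mu> y1 + res S \<mu> y2) = y1 + y2"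
    using assms by (simp add: shift_add res_in_dom shift_res)
  then show ?thesis
    using res_shift[OF assms(2), of "res S \<mu> y1 + res S \<mu> y2"] assms by (simp add: linopD res_in_dom)
qed

lemma res_scaleC:
  assumes "linop S" "\<mu> \<in> \<rho> S"
  shows "res S \<mu> (c *\<^sub>C y) = c *\<^sub>C res S \<mu> y"
proof -
  have "shift S \<mu> (c *\<^sub>C res S \<mu> y) = c *\<^sub>C y"
    using assms by (simp add: shift_scaleC res_in_dom shift_res)
  then show ?thesis
    using res_shift[OF assms(2), of "c *\<^sub>C res S \<mu> y"] assms by (simp add: linopD res_in_dom)
qed

lemma resolvent_setI:
  assumes lin: "linop T"
    and kernel: "\<And>x. x \<in> dom T \<Longrightarrow> shift T \<mu> x = 0 \<Longrightarrow> x = 0"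
    and solve: "\<And>z. \<exists>x\<in>dom T. shift T \<mu> x = z \<and> norm x \<le> C * norm z"
  shows "\<mu> \<in> \<rho> T"
proof -
  have inj: "inj_on (shift T \<mu>) (dom T)"
  proof (rule inj_onI)
    fix x y
    assume xy: "x \<in> dom T" "y \<in> dom T" "shift T \<mu> x = shift T \<mu> y"
    then have "shift T \<mu> (x - y) = 0" by (simp add: shift_diff[OF lin])
    then have "x - y = 0" using kernel linop_diff(1)[OF lin xy(1,2)] by blast
    then show "x = y" by simp
  qed
  have "norm (res T \<mu> z) \<le> C * norm z" for z
  proof -
    obtain x where x: "x \<in> dom T" "shift T \<mu> x = z" "norm x \<le> C * norm z"
      using solve by blast
    then have "res T \<mu> z = x" unfolding res_def using inj by (metis the_inv_into_f_f)
    with x show ?thesis by simp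
  qed
  moreover have "shift T \<mu> ` dom T = UNIV" using solve by (metis UNIV_eq_I imageI)
  ultimately show ?thesis unfolding resolvent_set_def using inj by blast
qed

lemma Cauchy_Lipschitz_image:
  fixes X :: "nat \<Rightarrow> 'a::real_normed_vector" and Z :: "nat \<Rightarrow> 'b::real_normed_vector"
  assumes "Cauchy Z" and "\<And>m n. norm (X m - X n) \<le> K * norm (Z m - Z n)"
  shows "Cauchy X"
proof (rule metric_CauchyI)
  fix e :: real
  assume e: "e > 0"
  define K' where "K' = \<bar>K\<bar> + 1"
  have K': "K' > 0" by (simp add: K'_def)
  obtain M where M: "\<And>m n. m \<ge> M \<Longrightarrow> n \<ge> M \<Longrightarrow> dist (Z m) (Z n) < e / K'"
    using assms(1) e K' unfolding Cauchy_def by (meson divide_pos_pos)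
  have "dist (X m) (X n) < e" if "M \<le> m" "M \<le> n" for m n
  proof -
    have "norm (X m - X n) \<le> K' * norm (Z m - Z n)"
      using assms(2)[of m n] unfolding K'_def
      by (smt (verit) mult_right_mono norm_ge_zero abs_ge_self)
    also have "\<dots> < e"
      using M[OF that] K' by (simp add: dist_norm pos_less_divide_eq mult.commute)
    finally show ?thesis by (simp add: dist_norm)
  qed
  then show "\<exists>M. \<forall>m\<ge>M. \<forall>n\<ge>M. dist (X m) (X n) < e" by blast
qed

lemma closed_opD:
  assumes "closed_op T" "\<And>n. xs n \<in> dom T" "xs \<longlonglongrightarrow> x" "(\<lambda>n. app T (xs n)) \<longlonglongrightarrow> y"
  shows "x \<in> dom T" "app T x = y"
proof -
  have lim: "(\<lambda>n. (xs n, app T (xs n))) \<longlonglongrightarrow> (x, y)"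
    by (rule tendsto_Pair[OF assms(3,4)])
  have graph: "(xs n, app T (xs n)) \<in> {(x, app T x) | x. x \<in> dom T}" for n
    using assms(2) by blast
  have "(x, y) \<in> {(x, app T x) | x. x \<in> dom T}"
    by (rule closed_sequentially[OF assms(1)[unfolded closed_op_def] graph lim])
  then show "x \<in> dom T" "app T x = y" by auto
qed

lemma closed_opI:
  assumes "\<And>xs x y. (\<And>n. xs n \<in> dom T) \<Longrightarrow> xs \<longlonglongrightarrow> x \<Longrightarrow> (\<lambda>n. app T (xs n)) \<longlonglongrightarrow> y
      \<Longrightarrow> x \<in> dom T \<and> app T x = y"
  shows "closed_op T"
  unfolding closed_op_def closed_sequential_limits
proof (intro allI impI)
  fix ps and p :: "'a \<times> 'a"
  assume "(\<forall>n. ps n \<in> {(x, app T x) | x. x \<in> dom T}) \<and> ps \<longlonglongrightarrow> p"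
  then have graph: "\<forall>n. \<exists>x. ps n = (x, app T x) \<and> x \<in> dom T" and lim: "ps \<longlonglongrightarrow> p"
    by auto
  obtain xs where ps: "\<And>n. ps n = (xs n, app T (xs n))" and dom: "\<And>n. xs n \<in> dom T"
    using choice[OF graph] by blast
  have "(\<lambda>n. fst (ps n)) \<longlonglongrightarrow> fst p" "(\<lambda>n. snd (ps n)) \<longlonglongrightarrow> snd p"
    using tendsto_fst[OF lim] tendsto_snd[OF lim] by simp_all
  then have "xs \<longlonglongrightarrow> fst p" "(\<lambda>n. app T (xs n)) \<longlonglongrightarrow> snd p"
    by (simp_all add: ps)
  then have "fst p \<in> dom T \<and> app T (fst p) = snd p"
    using assms dom by blast
  then have "p = (fst p, app T (fst p)) \<and> fst p \<in> dom T" by simp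
  then show "p \<in> {(x, app T x) | x. x \<in> dom T}" by blast
qed

section \<open>Adjoint inclusions\<close>

text \<open>\<open>formal_adjoint S T\<close> means \<open>T \<subseteq> S\<^sup>*\<close>, i.e. \<open>(Sv, x) = (v, Tx)\<close> on the domains.\<close>

definition formal_adjoint :: "'a::chilbert_space op \<Rightarrow> 'a op \<Rightarrow> bool" where
  "formal_adjoint S T \<longleftrightarrow> (\<forall>v\<in>dom S. \<forall>x\<in>dom T. cinner (app S v) x = cinner v (app T x))"

text \<open>\<open>contains_adjoint S T\<close> means \<open>S\<^sup>* \<subseteq> T\<close>: whenever \<open>v \<mapsto> (Sv, y)\<close> is represented
  by \<open>w\<close>, the vector \<open>y\<close> lies in \<open>dom T\<close> and \<open>Ty = w\<close>.  No density of \<open>dom S\<close> is needed.\<close>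

definition contains_adjoint :: "'a::chilbert_space op \<Rightarrow> 'a op \<Rightarrow> bool" where
  "contains_adjoint S T \<longleftrightarrow>
     (\<forall>y w. (\<forall>v\<in>dom S. cinner (app S v) y = cinner v w) \<longrightarrow> y \<in> dom T \<and> app T y = w)"

lemma contains_adjointD:
  "contains_adjoint S T \<Longrightarrow> (\<And>v. v \<in> dom S \<Longrightarrow> cinner (app S v) y = cinner v w)
    \<Longrightarrow> y \<in> dom T \<and> app T y = w"
  unfolding contains_adjoint_def by blast

lemma is_adjoint_formal: "is_adjoint S T \<Longrightarrow> formal_adjoint S T"
  unfolding is_adjoint_def formal_adjoint_def by blast

lemma is_adjoint_contains: "is_adjoint S T \<Longrightarrow> contains_adjoint S T"
  unfolding contains_adjoint_def
proof (intro allI impI)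
  fix y w
  assume adj: "is_adjoint S T" and rep: "\<forall>v\<in>dom S. cinner (app S v) y = cinner v w"
  then have y: "y \<in> dom T" unfolding is_adjoint_def by blast
  have "app T y = w"
  proof (rule dense_cinner_unique)
    show "closure (dom S) = UNIV" using adj unfolding is_adjoint_def by blast
    show "cinner u (app T y) = cinner u w" if "u \<in> dom S" for u
      using adj rep y that unfolding is_adjoint_def by metis
  qed
  with y show "y \<in> dom T \<and> app T y = w" ..
qed

lemma adjoint_linop:
  assumes formal: "formal_adjoint S T" and contains: "contains_adjoint S T"
  shows "linop T"
proof -
  have "0 \<in> dom T"
    using contains_adjointD[OF contains, of 0 0] by simp
  moreover have "x + y \<in> dom T \<and> app T (x + y) = app T x + app T y"
    if xy: "x \<in> dom T" "y \<in> dom T" for x y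
  proof (rule contains_adjointD[OF contains])
    show "cinner (app S v) (x + y) = cinner v (app T x + app T y)" if "v \<in> dom S" for v
      using formal xy that by (simp add: formal_adjoint_def cinner_add_right)
  qed
  moreover have "c *\<^sub>C x \<in> dom T \<and> app T (c *\<^sub>C x) = c *\<^sub>C app T x" if x: "x \<in> dom T" for c x
  proof (rule contains_adjointD[OF contains])
    show "cinner (app S v) (c *\<^sub>C x) = cinner v (c *\<^sub>C app T x)" if "v \<in> dom S" for v
      using formal x that by (simp add: formal_adjoint_def cinner_scaleC_right)
  qed
  ultimately show ?thesis unfolding linop_def by blast
qed

lemma adjoint_closed:
  assumes formal: "formal_adjoint S T" and contains: "contains_adjoint S T"
  shows "closed_op T"
proof (rule closed_opI)
  fix xs x y
  assume xs: "\<And>n. xs n \<in> dom T" and x: "xs \<longlonglongrightarrow> x" and y: "(\<lambda>n. app T (xs n)) \<longlonglongrightarrow> y"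
  have "cinner (app S v) x = cinner v y" if v: "v \<in> dom S" for v
  proof -
    have "(\<lambda>n. cinner (app S v) (xs n)) = (\<lambda>n. cinner v (app T (xs n)))"
      using formal v xs unfolding formal_adjoint_def by blast
    moreover have "(\<lambda>n. cinner (app S v) (xs n)) \<longlonglongrightarrow> cinner (app S v) x"
      using bounded_linear.tendsto[OF bounded_linear_cinner_right x] .
    moreover have "(\<lambda>n. cinner v (app T (xs n))) \<longlonglongrightarrow> cinner v y"
      using bounded_linear.tendsto[OF bounded_linear_cinner_right y] .
    ultimately show ?thesis using LIMSEQ_unique by metis
  qed
  then show "x \<in> dom T \<and> app T x = y"
    using contains_adjointD[OF contains] by blast
qed

lemma selfadjoint_formal: "selfadjoint S \<Longrightarrow> formal_adjoint S S"
  unfolding selfadjoint_def by (rule is_adjoint_formal)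

lemma selfadjoint_contains: "selfadjoint S \<Longrightarrow> contains_adjoint S S"
  unfolding selfadjoint_def by (rule is_adjoint_contains)

lemma selfadjoint_linop: "selfadjoint S \<Longrightarrow> linop S"
  using adjoint_linop selfadjoint_formal selfadjoint_contains by blast

lemma selfadjoint_dense: "selfadjoint S \<Longrightarrow> closure (dom S) = UNIV"
  unfolding selfadjoint_def is_adjoint_def by blast

lemma formal_adjoint_prod:
  assumes "selfadjoint A" "selfadjoint G"
  shows "formal_adjoint (A \<bullet>\<^sub>o\<^sub>p G) (G \<bullet>\<^sub>o\<^sub>p A)"
  using selfadjoint_formal[OF assms(1)] selfadjoint_formal[OF assms(2)]
  unfolding formal_adjoint_def dom_prod app_prod by auto

section \<open>Resolvents of adjoint operators\<close>

text \<open>If \<open>T \<subseteq> S\<^sup>*\<close> and \<open>\<mu> \<in> \<rho>(S)\<close>, then \<open>T - \<mu>\<^sup>*\<close> is injective: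
  \<open>(x, x) = ((S - \<mu>)v, x) = (v, (T - \<mu>\<^sup>*)x)\<close> for \<open>v = (S - \<mu>)\<^sup>-\<^sup>1x\<close>.\<close>

lemma formal_adjoint_kernel:
  assumes formal: "formal_adjoint S T" and mu: "\<mu> \<in> \<rho> S"
    and x: "x \<in> dom T" "shift T (cnj \<mu>) x = 0"
  shows "x = 0"
proof -
  define v where "v = res S \<mu> x"
  have v: "v \<in> dom S" "shift S \<mu> v = x"
    using mu by (simp_all add: v_def res_in_dom shift_res)
  have "cinner x x = cinner (app S v - \<mu> *\<^sub>C v) x"
    using v(2) by (simp add: shift_def)
  also have "\<dots> = cinner v (shift T (cnj \<mu>) x)"
    using formal v(1) x(1)
    by (simp add: formal_adjoint_def shift_def cinner_diff_left cinner_diff_right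
        cinner_scaleC_left cinner_scaleC_right)
  finally show ?thesis using x(2) by (simp add: cinner_self_eq_0)
qed

text \<open>The bounded adjoint \<open>R'\<close> of \<open>(S - \<mu>)\<^sup>-\<^sup>1\<close> satisfies \<open>(Sv, R'z) = (v, z + \<mu>\<^sup>*R'z)\<close>,
  i.e. \<open>R'z\<close> solves \<open>(S\<^sup>* - \<mu>\<^sup>*)y = z\<close> in the weak sense.\<close>

lemma resolvent_adjoint_solution:
  assumes lin: "linop S" and mu: "\<mu> \<in> \<rho> S"
  obtains R' C where "\<And>z v. v \<in> dom S \<Longrightarrow> cinner (app S v) (R' z) = cinner v (z + cnj \<mu> *\<^sub>C R' z)"
    and "\<And>z. norm (R' z) \<le> C * norm z"
proof -
  obtain C where C: "\<And>y. norm (res S \<mu> y) \<le> C * norm y"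
    using resolvent_setD(3)[OF mu] by blast
  obtain R' where R': "\<And>y z. cinner (res S \<mu> y) z = cinner y (R' z)"
    and bound: "\<And>z. norm (R' z) \<le> C * norm z"
    using bounded_adjoint_exists[of "res S \<mu>" C] res_add[OF lin mu] res_scaleC[OF lin mu] C
    by blast
  have "cinner (app S v) (R' z) = cinner v (z + cnj \<mu> *\<^sub>C R' z)" if v: "v \<in> dom S" for z v
  proof -
    have "cinner (app S v) (R' z) = cinner (shift S \<mu> v) (R' z) + cnj \<mu> * cinner v (R' z)"
      by (simp add: shift_def cinner_diff_left cinner_scaleC_left)
    also have "cinner (shift S \<mu> v) (R' z) = cinner v z"
      using R'[of "shift S \<mu> v" z] res_shift[OF mu v] by simp
    finally show ?thesis by (simp add: cinner_add_right cinner_scaleC_right)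
  qed
  with bound show ?thesis using that by blast
qed

lemma resolvent_of_adjoint:
  assumes lin: "linop S" and formal: "formal_adjoint S T" and contains: "contains_adjoint S T"
    and mu: "\<mu> \<in> \<rho> S"
  shows "cnj \<mu> \<in> \<rho> T"
proof -
  obtain R' C where R': "\<And>z v. v \<in> dom S \<Longrightarrow> cinner (app S v) (R' z) = cinner v (z + cnj \<mu> *\<^sub>C R' z)"
    and bound: "\<And>z. norm (R' z) \<le> C * norm z"
    using resolvent_adjoint_solution[OF lin mu] by blast
  show ?thesis
  proof (rule resolvent_setI[OF adjoint_linop[OF formal contains], where C = C])
    show "x \<in> dom T \<Longrightarrow> shift T (cnj \<mu>) x = 0 \<Longrightarrow> x = 0" for x
      by (rule formal_adjoint_kernel[OF formal mu])
    show "\<exists>x\<in>dom T. shift T (cnj \<mu>) x = z \<and> norm x \<le> C * norm z" for z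
      using contains_adjointD[OF contains R'] bound by (force simp: shift_def)
  qed
qed

corollary resolvent_nonempty_of_adjoint:
  assumes "linop S" "formal_adjoint S T" "contains_adjoint S T" "\<rho> S \<noteq> {}"
  shows "\<rho> T \<noteq> {}"
  using resolvent_of_adjoint[OF assms(1-3)] assms(4) by blast

section \<open>Conditions (a) and (b): the adjoint of one product contains the other\<close>

lemma closed_bounded_op_dom_closed:
  assumes lin: "linop T" and closed: "closed_op T" and bd: "bounded_op T"
  shows "closed (dom T)"
proof -
  obtain C where C: "\<And>x. x \<in> dom T \<Longrightarrow> norm (app T x) \<le> C * norm x"
    using bd unfolding bounded_op_def by blast
  show ?thesis
  proof (rule closed_sequential_limits[THEN iffD2], intro allI impI)
    fix xs x
    assume "(\<forall>n. xs n \<in> dom T) \<and> xs \<longlonglongrightarrow> x"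
    then have xs: "\<And>n. xs n \<in> dom T" and lim: "xs \<longlonglongrightarrow> x" by auto
    have "Cauchy (\<lambda>n. app T (xs n))"
    proof (rule Cauchy_Lipschitz_image[OF LIMSEQ_imp_Cauchy[OF lim], where K = C])
      show "norm (app T (xs m) - app T (xs n)) \<le> C * norm (xs m - xs n)" for m n
        using C[OF linop_diff(1)[OF lin xs xs]] linop_diff(2)[OF lin xs xs] by metis
    qed
    then obtain y where "(\<lambda>n. app T (xs n)) \<longlonglongrightarrow> y" using convergent_eq_Cauchy by blast
    then show "x \<in> dom T" using closed_opD(1)[OF closed xs lim] by blast
  qed
qed

lemma bounded_selfadjoint_dom:
  assumes sa: "selfadjoint G" and bd: "bounded_op G"
  shows "dom G = UNIV"
proof -
  have "closed_op G"
    using adjoint_closed selfadjoint_formal[OF sa] selfadjoint_contains[OF sa] by blast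
  then have "closed (dom G)"
    using closed_bounded_op_dom_closed selfadjoint_linop[OF sa] bd by blast
  then show ?thesis using selfadjoint_dense[OF sa] by (simp add: closure_closed)
qed

text \<open>If \<open>G\<close> is everywhere defined, then \<open>(GA)\<^sup>* \<subseteq> AG\<close>: \<open>(GAv, y) = (Av, Gy)\<close>.\<close>

lemma contains_adjoint_prod_total:
  assumes saA: "selfadjoint A" and saG: "selfadjoint G" and dG: "dom G = UNIV"
  shows "contains_adjoint (G \<bullet>\<^sub>o\<^sub>p A) (A \<bullet>\<^sub>o\<^sub>p G)"
  unfolding contains_adjoint_def
proof (intro allI impI)
  fix y w
  assume rep: "\<forall>v\<in>dom (G \<bullet>\<^sub>o\<^sub>p A). cinner (app (G \<bullet>\<^sub>o\<^sub>p A) v) y = cinner v w"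
  have "cinner (app A v) (app G y) = cinner v w" if "v \<in> dom A" for v
    using rep that selfadjoint_formal[OF saG] dG
    by (simp add: dom_prod app_prod formal_adjoint_def)
  then show "y \<in> dom (A \<bullet>\<^sub>o\<^sub>p G) \<and> app (A \<bullet>\<^sub>o\<^sub>p G) y = w"
    using contains_adjointD[OF selfadjoint_contains[OF saA]] dG by (simp add: dom_prod app_prod)
qed

text \<open>If \<open>G\<close> is boundedly invertible, then \<open>(AG)\<^sup>* \<subseteq> GA\<close>: for \<open>u \<in> dom A\<close> one has
  \<open>(Au, y) = (AG G\<^sup>-\<^sup>1u, y) = (G\<^sup>-\<^sup>1u, w) = (u, G\<^sup>-\<^sup>1w)\<close>.\<close>

lemma contains_adjoint_prod_invertible:
  assumes saA: "selfadjoint A" and saG: "selfadjoint G" and G0: "0 \<in> \<rho> G"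
  shows "contains_adjoint (A \<bullet>\<^sub>o\<^sub>p G) (G \<bullet>\<^sub>o\<^sub>p A)"
  unfolding contains_adjoint_def
proof (intro allI impI)
  fix y w
  assume rep: "\<forall>v\<in>dom (A \<bullet>\<^sub>o\<^sub>p G). cinner (app (A \<bullet>\<^sub>o\<^sub>p G) v) y = cinner v w"
  define Gi where "Gi = res G 0"
  have Gi_dom: "Gi u \<in> dom G" for u
    using res_in_dom[OF G0] by (simp add: Gi_def)
  have G_Gi: "app G (Gi u) = u" for u
    using shift_res[OF G0, of u] by (simp add: Gi_def shift_def)
  have Gi_sym: "cinner (Gi a) b = cinner a (Gi b)" for a b
    using selfadjoint_formal[OF saG] Gi_dom G_Gi unfolding formal_adjoint_def by metis
  have "cinner (app A u) y = cinner u (Gi w)" if u: "u \<in> dom A" for u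
  proof -
    have "Gi u \<in> dom (A \<bullet>\<^sub>o\<^sub>p G)" using u Gi_dom G_Gi by (simp add: dom_prod)
    then have "cinner (app (A \<bullet>\<^sub>o\<^sub>p G) (Gi u)) y = cinner (Gi u) w" using rep by blast
    then show ?thesis by (simp add: app_prod G_Gi Gi_sym)
  qed
  then have "y \<in> dom A" "app A y = Gi w"
    using contains_adjointD[OF selfadjoint_contains[OF saA]] by blast+
  then show "y \<in> dom (G \<bullet>\<^sub>o\<^sub>p A) \<and> app (G \<bullet>\<^sub>o\<^sub>p A) y = w"
    using Gi_dom G_Gi by (simp add: dom_prod app_prod)
qed

section \<open>Condition (d): extension of a bounded right inverse by closedness\<close>

lemma right_inverse_diff:
  assumes lin: "linop T" and kernel: "\<And>x. x \<in> dom T \<Longrightarrow> shift T \<mu> x = 0 \<Longrightarrow> x = 0"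
    and x1: "x1 \<in> dom T" "shift T \<mu> x1 = z1" and x2: "x2 \<in> dom T" "shift T \<mu> x2 = z2"
    and x: "x \<in> dom T" "shift T \<mu> x = z1 - z2"
  shows "x1 - x2 = x"
proof -
  have "x1 - x2 - x \<in> dom T"
    using linop_diff(1)[OF lin linop_diff(1)[OF lin x1(1) x2(1)] x(1)] .
  moreover have "shift T \<mu> (x1 - x2 - x) = 0"
    using x1 x2 x by (simp add: shift_diff[OF lin] linop_diff(1)[OF lin])
  ultimately show ?thesis using kernel by (metis eq_iff_diff_eq_0)
qed

lemma resolvent_setI_dense:
  assumes lin: "linop T" and closed: "closed_op T"
    and kernel: "\<And>x. x \<in> dom T \<Longrightarrow> shift T \<mu> x = 0 \<Longrightarrow> x = 0"
    and dense: "closure D = UNIV" and sub: "\<And>z1 z2. z1 \<in> D \<Longrightarrow> z2 \<in> D \<Longrightarrow> z1 - z2 \<in> D"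
    and F: "\<And>z. z \<in> D \<Longrightarrow> F z \<in> dom T \<and> shift T \<mu> (F z) = z"
    and bound: "\<And>z. z \<in> D \<Longrightarrow> norm (F z) \<le> K * norm z"
  shows "\<mu> \<in> \<rho> T"
proof -
  have F_diff: "F z1 - F z2 = F (z1 - z2)" if "z1 \<in> D" "z2 \<in> D" for z1 z2
    using right_inverse_diff[OF lin kernel] F sub that by blast
  show ?thesis
  proof (rule resolvent_setI[OF lin kernel, where C = K])
    fix z
    obtain zs where zs: "\<And>n. zs n \<in> D" "zs \<longlonglongrightarrow> z"
      using dense closure_sequential by (metis UNIV_I)
    have "Cauchy (\<lambda>n. F (zs n))"
    proof (rule Cauchy_Lipschitz_image[OF LIMSEQ_imp_Cauchy[OF zs(2)], where K = K])
      show "norm (F (zs m) - F (zs n)) \<le> K * norm (zs m - zs n)" for m n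
        using F_diff bound sub zs(1) by metis
    qed
    then obtain x where x: "(\<lambda>n. F (zs n)) \<longlonglongrightarrow> x" using convergent_eq_Cauchy by blast
    have "app T (F (zs n)) = zs n + \<mu> *\<^sub>C F (zs n)" for n
      using F[OF zs(1)] by (simp add: shift_def algebra_simps)
    moreover have "(\<lambda>n. zs n + \<mu> *\<^sub>C F (zs n)) \<longlonglongrightarrow> z + \<mu> *\<^sub>C x"
      by (intro tendsto_add zs(2) bounded_linear.tendsto[OF bounded_linear_scaleC] x)
    ultimately have "(\<lambda>n. app T (F (zs n))) \<longlonglongrightarrow> z + \<mu> *\<^sub>C x" by simp
    then have xT: "x \<in> dom T" "app T x = z + \<mu> *\<^sub>C x"
      using closed_opD[OF closed _ x] F zs(1) by blast+
    have "norm x \<le> K * norm z"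
    proof (rule LIMSEQ_le)
      show "(\<lambda>n. norm (F (zs n))) \<longlonglongrightarrow> norm x" by (intro tendsto_intros x)
      show "(\<lambda>n. K * norm (zs n)) \<longlonglongrightarrow> K * norm z" by (intro tendsto_intros zs(2))
      show "\<exists>N. \<forall>n\<ge>N. norm (F (zs n)) \<le> K * norm (zs n)" using bound zs(1) by blast
    qed
    moreover have "shift T \<mu> x = z" using xT(2) by (simp add: shift_def)
    ultimately show "\<exists>x\<in>dom T. shift T \<mu> x = z \<and> norm x \<le> K * norm z"
      using xT(1) by blast
  qed
qed

text \<open>For \<open>\<mu> \<in> \<rho>(AG) \<setminus> {0}\<close> the operator \<open>GA - \<mu>\<close> is injective: if \<open>GAx = \<mu>x\<close> then
  \<open>u = Ax\<close> satisfies \<open>AGu = \<mu>u\<close>, so \<open>u = 0\<close> and \<open>\<mu>x = Gu = 0\<close>.\<close>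

lemma prod_swap_kernel:
  assumes linA: "linop A" and linG: "linop G" and mu: "\<mu> \<in> \<rho> (A \<bullet>\<^sub>o\<^sub>p G)" "\<mu> \<noteq> 0"
    and x: "x \<in> dom (G \<bullet>\<^sub>o\<^sub>p A)" "shift (G \<bullet>\<^sub>o\<^sub>p A) \<mu> x = 0"
  shows "x = 0"
proof -
  define u where "u = app A x"
  have xA: "x \<in> dom A" and uG: "u \<in> dom G"
    using x(1) by (simp_all add: dom_prod u_def)
  have Gu: "app G u = \<mu> *\<^sub>C x"
    using x(2) by (simp add: shift_def app_prod u_def)
  have "u \<in> dom (A \<bullet>\<^sub>o\<^sub>p G)"
    using uG Gu linopD(4)[OF linA xA] by (simp add: dom_prod)
  moreover have "shift (A \<bullet>\<^sub>o\<^sub>p G) \<mu> u = 0"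
    using Gu linopD(5)[OF linA xA, of \<mu>] by (simp add: shift_def app_prod u_def)
  moreover have "0 \<in> dom (A \<bullet>\<^sub>o\<^sub>p G)" "shift (A \<bullet>\<^sub>o\<^sub>p G) \<mu> 0 = 0"
    using linop_prod[OF linA linG] by (simp_all add: linopD(1) linop_app_zero shift_def)
  ultimately have "u = 0"
    using resolvent_setD(1)[OF mu(1)] by (metis inj_onD)
  then have "cmod \<mu> * norm x = 0"
    using Gu linop_app_zero[OF linG] by (metis norm_scaleC norm_zero)
  then show "x = 0" using mu(2) by simp
qed

lemma prod_swap_right_inverse:
  assumes linA: "linop A" and mu: "\<mu> \<in> \<rho> (A \<bullet>\<^sub>o\<^sub>p G)" "\<mu> \<noteq> 0" and z: "z \<in> dom A"
  defines "x \<equiv> (1 / \<mu>) *\<^sub>C (app G (res (A \<bullet>\<^sub>o\<^sub>p G) \<mu> (app A z)) - z)"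
  shows "x \<in> dom (G \<bullet>\<^sub>o\<^sub>p A) \<and> shift (G \<bullet>\<^sub>o\<^sub>p A) \<mu> x = z"
proof -
  define v where "v = res (A \<bullet>\<^sub>o\<^sub>p G) \<mu> (app A z)"
  have "v \<in> dom (A \<bullet>\<^sub>o\<^sub>p G)" using res_in_dom[OF mu(1)] by (simp add: v_def)
  then have vG: "v \<in> dom G" and GvA: "app G v \<in> dom A" by (simp_all add: dom_prod)
  have AGv: "app A (app G v) - \<mu> *\<^sub>C v = app A z"
    using shift_res[OF mu(1)] by (simp add: v_def shift_def app_prod)
  have x_v: "x = (1 / \<mu>) *\<^sub>C (app G v - z)" by (simp add: x_def v_def)
  have dA: "app G v - z \<in> dom A" using linop_diff(1)[OF linA GvA z] .
  have xA: "x \<in> dom A" unfolding x_v using linopD(4)[OF linA dA] .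
  have "app A x = (1 / \<mu>) *\<^sub>C (app A (app G v) - app A z)"
    unfolding x_v using linopD(5)[OF linA dA] linop_diff(2)[OF linA GvA z] by simp
  also have "app A (app G v) - app A z = \<mu> *\<^sub>C v" using AGv by (simp add: algebra_simps)
  also have "(1 / \<mu>) *\<^sub>C (\<mu> *\<^sub>C v) = v" using mu(2) by (simp add: scaleC_scaleC scaleC_one)
  finally have Ax: "app A x = v" .
  have "shift (G \<bullet>\<^sub>o\<^sub>p A) \<mu> x = app G v - \<mu> *\<^sub>C ((1 / \<mu>) *\<^sub>C (app G v - z))"
    unfolding shift_def app_prod Ax by (simp add: x_v)
  also have "\<dots> = z" using mu(2) by (simp add: scaleC_scaleC scaleC_one)
  finally show ?thesis using xA Ax vG by (simp add: dom_prod)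
qed

lemma resolvent_prod_swap:
  assumes linA: "linop A" and linG: "linop G" and dense: "closure (dom A) = UNIV"
    and closed: "closed_op (G \<bullet>\<^sub>o\<^sub>p A)" and mu: "\<mu> \<in> \<rho> (A \<bullet>\<^sub>o\<^sub>p G)" "\<mu> \<noteq> 0"
    and bnd: "\<forall>x\<in>dom A. norm (app G (res (A \<bullet>\<^sub>o\<^sub>p G) \<mu> (app A x))) \<le> C * norm x"
  shows "\<mu> \<in> \<rho> (G \<bullet>\<^sub>o\<^sub>p A)"
proof (rule resolvent_setI_dense[OF linop_prod[OF linG linA] closed _ dense])
  show "x \<in> dom (G \<bullet>\<^sub>o\<^sub>p A) \<Longrightarrow> shift (G \<bullet>\<^sub>o\<^sub>p A) \<mu> x = 0 \<Longrightarrow> x = 0" for x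
    by (rule prod_swap_kernel[OF linA linG mu])
  show "z1 \<in> dom A \<Longrightarrow> z2 \<in> dom A \<Longrightarrow> z1 - z2 \<in> dom A" for z1 z2
    by (rule linop_diff(1)[OF linA])
  show "z \<in> dom A \<Longrightarrow> (\<lambda>z. (1 / \<mu>) *\<^sub>C (app G (res (A \<bullet>\<^sub>o\<^sub>p G) \<mu> (app A z)) - z)) z
      \<in> dom (G \<bullet>\<^sub>o\<^sub>p A) \<and> shift (G \<bullet>\<^sub>o\<^sub>p A) \<mu> ((\<lambda>z. (1 / \<mu>) *\<^sub>C (app G (res (A \<bullet>\<^sub>o\<^sub>p G) \<mu> (app A z)) - z)) z) = z" for z
    using prod_swap_right_inverse[OF linA mu] by simp
  show "norm ((\<lambda>z. (1 / \<mu>) *\<^sub>C (app G (res (A \<bullet>\<^sub>o\<^sub>p G) \<mu> (app A z)) - z)) z)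
      \<le> ((C + 1) / cmod \<mu>) * norm z" if z: "z \<in> dom A" for z
  proof -
    have "norm (app G (res (A \<bullet>\<^sub>o\<^sub>p G) \<mu> (app A z)) - z) \<le> C * norm z + norm z"
      using order_trans[OF norm_triangle_ineq4 add_right_mono] bnd z by blast
    then show ?thesis
      using mu(2) by (simp add: norm_scaleC norm_divide divide_right_mono algebra_simps)
  qed
qed

theorem mainTheorem3:
  fixes A G :: "'a::chilbert_space op"
  assumes "selfadjoint A" and "selfadjoint G"
    and "(bounded_op G \<and> \<rho> (G \<bullet>\<^sub>o\<^sub>p A) \<noteq> {})
       \<or> (0 \<in> \<rho> G \<and> \<rho> (A \<bullet>\<^sub>o\<^sub>p G) \<noteq> {})
       \<or> (is_adjoint (A \<bullet>\<^sub>o\<^sub>p G) (G \<bullet>\<^sub>o\<^sub>p A) \<and> \<rho> (A \<bullet>\<^sub>o\<^sub>p G) \<noteq> {})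
       \<or> (\<rho> (A \<bullet>\<^sub>o\<^sub>p G) \<noteq> {} \<and> closed_op (G \<bullet>\<^sub>o\<^sub>p A) \<and>
          (\<exists>\<mu>\<in>\<rho> (A \<bullet>\<^sub>o\<^sub>p G) - {0}.
             \<exists>C. \<forall>x\<in>dom A. norm (app G (res (A \<bullet>\<^sub>o\<^sub>p G) \<mu> (app A x))) \<le> C * norm x))"
  shows "\<rho> (A \<bullet>\<^sub>o\<^sub>p G) \<noteq> {} \<and> \<rho> (G \<bullet>\<^sub>o\<^sub>p A) \<noteq> {}"
proof -
  have linA: "linop A" and linG: "linop G"
    using assms(1,2) by (simp_all add: selfadjoint_linop)
  have AG_GA: "formal_adjoint (A \<bullet>\<^sub>o\<^sub>p G) (G \<bullet>\<^sub>o\<^sub>p A)" and GA_AG: "formal_adjoint (G \<bullet>\<^sub>o\<^sub>p A) (A \<bullet>\<^sub>o\<^sub>p G)"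
    using formal_adjoint_prod assms(1,2) by blast+
  from assms(3) show ?thesis
  proof (elim disjE conjE bexE exE)
    assume "bounded_op G" "\<rho> (G \<bullet>\<^sub>o\<^sub>p A) \<noteq> {}"
    then show ?thesis
      using resolvent_nonempty_of_adjoint[OF linop_prod[OF linG linA] GA_AG
          contains_adjoint_prod_total[OF assms(1,2) bounded_selfadjoint_dom[OF assms(2)]]] by blast
  next
    assume "0 \<in> \<rho> G" "\<rho> (A \<bullet>\<^sub>o\<^sub>p G) \<noteq> {}"
    then show ?thesis
      using resolvent_nonempty_of_adjoint[OF linop_prod[OF linA linG] AG_GA
          contains_adjoint_prod_invertible[OF assms(1,2)]] by blast
  next
    assume "is_adjoint (A \<bullet>\<^sub>o\<^sub>p G) (G \<bullet>\<^sub>o\<^sub>p A)" "\<rho> (A \<bullet>\<^sub>o\<^sub>p G) \<noteq> {}"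
    then show ?thesis
      using resolvent_nonempty_of_adjoint[OF linop_prod[OF linA linG] AG_GA is_adjoint_contains]
      by blast
  next
    fix \<mu> C
    assume "\<rho> (A \<bullet>\<^sub>o\<^sub>p G) \<noteq> {}" "closed_op (G \<bullet>\<^sub>o\<^sub>p A)" "\<mu> \<in> \<rho> (A \<bullet>\<^sub>o\<^sub>p G) - {0}"
      "\<forall>x\<in>dom A. norm (app G (res (A \<bullet>\<^sub>o\<^sub>p G) \<mu> (app A x))) \<le> C * norm x"
    then show ?thesis
      using resolvent_prod_swap[OF linA linG selfadjoint_dense[OF assms(1)]] by blast
  qed
qed

end
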